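(* Let $X_1, X_2, \ldots$ be independent random variables, each uniformly distributed on $[-1,1]$, and fix $\varepsilon > 0$. For $t \ge 0$ and $z \in \mathbb{R}$, let $f_t(z) = 1$ if there exists $S \subseteq \{1,\dots,t\}$ with $\lvert z - \sum_{i \in S} X_i \rvert < \varepsilon$, and $f_t(z) = 0$ otherwise; let $v_t = \frac{1}{2}\int_{-1}^{1} f_t(z)\,\mathrm{d}z$, and let $\tau_1 = \min\{t \ge 0 : v_t > 1/2\}$. Let $t$ be an integer, and given $\beta \in (0,1/8)$, let $p_\beta = 1 - \frac{7}{8(1-\beta)}$ and $i^* = \left\lceil \frac{\log\frac{1}{2\varepsilon}}{\log(1+\beta)} \right\rceil$. If $t \ge i^*/p_\beta$, then $$\Pr[\tau_1 \le t] \ge 1 - \exp\left[-\frac{2p_\beta^2}{t}\left(t - \frac{i^*}{p_\beta}\right)^2\right].$$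
   Context: $f_t$ is the indicator that $z$ can be approximated to within error strictly less than $\varepsilon$ by a subset sum of the first $t$ variables (the empty sum being $0$); $v_t$ is the fraction of $[-1,1]$ so approximated; $\tau_1$ is the first time this fraction exceeds $1/2$. $\log$ denotes the natural logarithm. *)

theory Defs
  imports "HOL-Probability.Probability"
begin

text \<open>Variables are indexed from 0: X 0, X 1, ... play the role of X_1, X_2, ...;
  the first t variables are X i for i < t.\<close>

definition approx_f :: "real \<Rightarrow> (nat \<Rightarrow> real) \<Rightarrow> nat \<Rightarrow> real \<Rightarrow> real" where
  "approx_f \<epsilon> x t z =
     (if \<exists>S \<subseteq> {..<t}. \<bar>z - (\<Sum>i\<in>S. x i)\<bar> < \<epsilon> then 1 else 0)"

definition approx_v :: "real \<Rightarrow> (nat \<Rightarrow> real) \<Rightarrow> nat \<Rightarrow> real" where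
  "approx_v \<epsilon> x t = (1/2) * integral {-1..1} (approx_f \<epsilon> x t)"

definition tau1 :: "real \<Rightarrow> (nat \<Rightarrow> real) \<Rightarrow> ereal" where
  "tau1 \<epsilon> x =
     (if \<exists>t. approx_v \<epsilon> x t > 1/2
      then ereal (real (LEAST t. approx_v \<epsilon> x t > 1/2)) else \<infinity>)"

end

theory Submission
  imports Defs
begin

text \<open>
  Let \<open>A\<^sub>t\<close> be the set of reals within \<open>\<epsilon>\<close> of a subset sum of the first \<open>t\<close> variables, so that
  \<open>v\<^sub>t\<close> is half the measure of \<open>A\<^sub>t \<inter> [-1,1]\<close> and \<open>A\<^sub>t\<^sub>+\<^sub>1 = A\<^sub>t \<union> (A\<^sub>t + X\<^sub>t\<^sub>+\<^sub>1)\<close>.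
  For \<open>B \<subseteq> [-1,1]\<close> of measure \<open>b \<le> 1\<close> and a uniform shift \<open>s\<close>, the measure of
  \<open>(B + s) \<inter> [-1,1]\<close> has mean at least \<open>(b + b\<^sup>2/4)/2\<close> while that of \<open>(B + s) \<inter> B\<close> has mean
  at most \<open>b\<^sup>2/2\<close>; hence with probability at least \<open>p\<^sub>\<beta>\<close> the shift adds \<open>\<beta> b\<close> of new measure.
  So, whatever happened before, step \<open>t\<close> succeeds (\<open>v\<^sub>t\<^sub>+\<^sub>1 \<ge> (1 + \<beta>) v\<^sub>t\<close>, or already
  \<open>v\<^sub>t > 1/2\<close>) with probability at least \<open>p\<^sub>\<beta>\<close>. As \<open>v\<^sub>0 = \<epsilon>\<close>, at most \<open>i\<^sup>*\<close> successes can occur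
  while \<open>v\<close> stays below \<open>1/2\<close>, and a Chernoff bound for the number of successes, using
  Hoeffding's lemma for a Bernoulli variable one step at a time, gives the estimate.
\<close>

section \<open>The covered set\<close>

definition approx_set :: "real \<Rightarrow> (nat \<Rightarrow> real) \<Rightarrow> nat \<Rightarrow> real set" where
  "approx_set e x t = {y. \<exists>S\<subseteq>{..<t}. \<bar>y - (\<Sum>i\<in>S. x i)\<bar> < e}"

lemma approx_f_eq_indicator: "approx_f e x t = indicator (approx_set e x t)"
  by (auto simp: approx_f_def approx_set_def fun_eq_iff indicator_def)

lemma open_approx_set: "open (approx_set e x t)"
proof -
  have "approx_set e x t = (\<Union>S\<in>Pow {..<t}. {y. \<bar>y - (\<Sum>i\<in>S. x i)\<bar> < e})"
    by (auto simp: approx_set_def)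
  moreover have "open {y. \<bar>y - (\<Sum>i\<in>S. x i)\<bar> < e}" for S
    by (intro open_Collect_less continuous_intros)
  ultimately show ?thesis
    by auto
qed

lemma approx_set_borel [measurable]: "approx_set e x t \<in> sets borel"
  using open_approx_set by auto

lemma approx_set_cong:
  assumes "\<And>i. i < t \<Longrightarrow> x i = x' i"
  shows "approx_set e x t = approx_set e x' t"
proof -
  have "(\<Sum>i\<in>S. x i) = (\<Sum>i\<in>S. x' i)" if "S \<subseteq> {..<t}" for S
    using that assms by (intro sum.cong) auto
  then show ?thesis
    unfolding approx_set_def by (simp cong: conj_cong)
qed

lemma approx_set_0: "approx_set e x 0 = {-e<..<e}"
  by (auto simp: approx_set_def abs_less_iff)

lemma approx_set_Suc: "approx_set e x (Suc t) = approx_set e x t \<union> {y. y - x t \<in> approx_set e x t}"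
proof -
  have split: "(\<exists>S\<subseteq>{..<Suc t}. P S)
      \<longleftrightarrow> (\<exists>S\<subseteq>{..<t}. P S) \<or> (\<exists>S\<subseteq>{..<t}. P (insert t S))" for P
  proof
    assume "\<exists>S\<subseteq>{..<Suc t}. P S"
    then obtain S where S: "S \<subseteq> {..<Suc t}" "P S" by blast
    have "S - {t} \<subseteq> {..<t}"
      using S(1) by (auto simp: less_Suc_eq)
    moreover have "S = S - {t} \<or> S = insert t (S - {t})"
      by blast
    ultimately show "(\<exists>S\<subseteq>{..<t}. P S) \<or> (\<exists>S\<subseteq>{..<t}. P (insert t S))"
      using S(2) by metis
  next
    assume "(\<exists>S\<subseteq>{..<t}. P S) \<or> (\<exists>S\<subseteq>{..<t}. P (insert t S))"
    moreover have "S \<subseteq> {..<Suc t} \<and> insert t S \<subseteq> {..<Suc t}" if "S \<subseteq> {..<t}" for S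
      using that by auto
    ultimately show "\<exists>S\<subseteq>{..<Suc t}. P S"
      by blast
  qed
  have insert: "y - (\<Sum>i\<in>insert t S. x i) = (y - x t) - (\<Sum>i\<in>S. x i)" if "S \<subseteq> {..<t}" for S y
    using that by (subst sum.insert) (auto intro: finite_subset)
  have shifted: "(\<exists>S\<subseteq>{..<t}. \<bar>y - (\<Sum>i\<in>insert t S. x i)\<bar> < e) \<longleftrightarrow> y - x t \<in> approx_set e x t" for y
    unfolding approx_set_def mem_Collect_eq by (intro ex_cong1 conj_cong refl) (simp only: insert)
  show ?thesis
  proof (rule set_eqI)
    fix y
    have "y \<in> approx_set e x (Suc t) \<longleftrightarrow> (\<exists>S\<subseteq>{..<Suc t}. \<bar>y - (\<Sum>i\<in>S. x i)\<bar> < e)"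
      by (simp add: approx_set_def)
    also have "\<dots> \<longleftrightarrow> (\<exists>S\<subseteq>{..<t}. \<bar>y - (\<Sum>i\<in>S. x i)\<bar> < e)
        \<or> (\<exists>S\<subseteq>{..<t}. \<bar>y - (\<Sum>i\<in>insert t S. x i)\<bar> < e)"
      by (rule split)
    also have "\<dots> \<longleftrightarrow> y \<in> approx_set e x t \<union> {y. y - x t \<in> approx_set e x t}"
      unfolding shifted by (simp add: approx_set_def)
    finally show "y \<in> approx_set e x (Suc t)
        \<longleftrightarrow> y \<in> approx_set e x t \<union> {y. y - x t \<in> approx_set e x t}" .
  qed
qed

lemma approx_v_eq_measure: "approx_v e x t = measure lborel (approx_set e x t \<inter> {-1..1}) / 2"
proof -
  have "(\<lambda>y. if y \<in> {-1..1} then approx_f e x t y else 0)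
      = (indicator (approx_set e x t \<inter> {-1..1}) :: real \<Rightarrow> real)"
    unfolding approx_f_eq_indicator by (auto simp: indicator_def fun_eq_iff)
  then have "integral {-1..1} (approx_f e x t) = integral UNIV (indicator (approx_set e x t \<inter> {-1..1}) :: real \<Rightarrow> real)"
    by (metis integral_restrict_UNIV)
  also have "\<dots> = measure lebesgue (approx_set e x t \<inter> {-1..1})"
    by (rule lmeasure_integral_UNIV[symmetric]) (intro bounded_set_imp_lmeasurable, auto intro: bounded_Int)
  also have "\<dots> = measure lborel (approx_set e x t \<inter> {-1..1})"
    by (intro measure_completion) simp
  finally show ?thesis
    unfolding approx_v_def by simp
qed

lemma approx_v_nonneg: "0 \<le> approx_v e x t"
  unfolding approx_v_eq_measure by simp

lemma emeasure_approx_set_window: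
  "emeasure lborel (approx_set e x t \<inter> {-1..1}) = ennreal (2 * approx_v e x t)"
proof -
  have "approx_set e x t \<inter> {-1..1} \<in> fmeasurable lborel"
    by (rule fmeasurableI2[of "{-1..1}"]) (auto intro: fmeasurableI)
  then show ?thesis
    unfolding approx_v_eq_measure by (simp add: emeasure_eq_measure2)
qed

lemma approx_v_cong:
  assumes "\<And>i. i < t \<Longrightarrow> x i = x' i"
  shows "approx_v e x t = approx_v e x' t"
  unfolding approx_v_eq_measure using approx_set_cong[OF assms] by simp

lemma approx_v_Suc_ge: "approx_v e x t \<le> approx_v e x (Suc t)"
proof -
  have "approx_set e x (Suc t) \<inter> {-1..1} \<in> fmeasurable lborel"
    by (rule fmeasurableI2[of "{-1..1}"]) (auto intro: fmeasurableI)
  then show ?thesis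
    unfolding approx_v_eq_measure
    by (intro divide_right_mono measure_mono_fmeasurable) (auto simp: approx_set_Suc)
qed

lemma approx_v_0:
  assumes "0 < e"
  shows "approx_v e x 0 = min e 1"
proof (cases "e \<le> 1")
  case True
  then have "approx_set e x 0 \<inter> {-1..1} = {-e<..<e}"
    by (auto simp: approx_set_0)
  then show ?thesis
    using True assms by (simp add: approx_v_eq_measure)
next
  case False
  then have "approx_set e x 0 \<inter> {-1..1} = {-1..1}"
    by (auto simp: approx_set_0)
  then show ?thesis
    using False by (simp add: approx_v_eq_measure)
qed

lemma borel_measurable_approx_v:
  fixes g :: "'b \<Rightarrow> nat \<Rightarrow> real"
  assumes "\<And>i. i < t \<Longrightarrow> (\<lambda>w. g w i) \<in> borel_measurable N"
  shows "(\<lambda>w. approx_v e (g w) t) \<in> borel_measurable N"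
proof -
  define Q where "Q = {p \<in> space (N \<Otimes>\<^sub>M lborel).
    \<exists>S\<in>Pow {..<t}. \<bar>snd p - (\<Sum>i\<in>S. g (fst p) i)\<bar> < e \<and> snd p \<in> {-1..1}}"
  have "Q \<in> sets (N \<Otimes>\<^sub>M lborel)"
    unfolding Q_def
  proof (intro pred_intros_finite[unfolded pred_def] finite_Pow_iff[THEN iffD2] finite_lessThan)
    fix S assume "S \<in> Pow {..<t}"
    then have [measurable]: "(\<lambda>p. \<Sum>i\<in>S. g (fst p) i) \<in> borel_measurable (N \<Otimes>\<^sub>M lborel)"
      by (intro borel_measurable_sum measurable_compose[OF measurable_fst assms]) auto
    show "{p \<in> space (N \<Otimes>\<^sub>M lborel). \<bar>snd p - (\<Sum>i\<in>S. g (fst p) i)\<bar> < e \<and> snd p \<in> {-1..1}}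
        \<in> sets (N \<Otimes>\<^sub>M lborel)"
      by measurable
  qed
  then have "(\<lambda>w. emeasure lborel (Pair w -` Q)) \<in> borel_measurable N"
    by (rule lborel.measurable_emeasure_Pair)
  moreover have "Pair w -` Q = approx_set e (g w) t \<inter> {-1..1}" if "w \<in> space N" for w
    using that by (auto simp: Q_def approx_set_def space_pair_measure)
  ultimately have "(\<lambda>w. enn2real (emeasure lborel (approx_set e (g w) t \<inter> {-1..1})) / 2) \<in> borel_measurable N"
    by (simp cong: measurable_cong)
  then show ?thesis
    by (simp add: emeasure_approx_set_window approx_v_nonneg)
qed

section \<open>Random translates of a subset of [-1,1]\<close>

abbreviation unif :: "real measure" where
  "unif \<equiv> uniform_measure lborel {-1..1}"

lemma prob_space_unif: "prob_space unif"
  by (intro prob_space_uniform_measure) auto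

lemma nn_integral_unif:
  assumes "f \<in> borel_measurable borel"
  shows "(\<integral>\<^sup>+s. f s \<partial>unif) = (\<integral>\<^sup>+s. f s * indicator {-1..1} s \<partial>lborel) / 2"
  using nn_integral_uniform_measure[of f lborel "{-1..1::real}"] assms by simp

lemma emeasure_lborel_translate:
  assumes "B \<in> sets borel"
  shows "emeasure lborel {y. y - s \<in> B} = emeasure lborel (B :: real set)"
proof -
  have "emeasure lborel B = emeasure (distr lborel borel ((+) (- s))) B"
    by (simp add: lborel_distr_plus)
  also have "\<dots> = emeasure lborel {y. y - s \<in> B}"
    using assms by (simp add: emeasure_distr vimage_def)
  finally show ?thesis ..
qed

lemma borel_measurable_emeasure_translate_Int:
  assumes [measurable]: "B \<in> sets borel" "C \<in> sets borel"
  shows "(\<lambda>s. emeasure lborel ({y. y - s \<in> B} \<inter> C)) \<in> borel_measurable (borel :: real measure)"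
proof -
  have "{p \<in> space (borel \<Otimes>\<^sub>M lborel). snd p - fst p \<in> B \<and> snd p \<in> C}
      \<in> sets (borel \<Otimes>\<^sub>M (lborel :: real measure))"
    by measurable
  from lborel.measurable_emeasure_Pair[OF this] show ?thesis
    by (rule measurable_cong[THEN iffD1, rotated])
       (auto simp: space_pair_measure intro!: arg_cong[where f="emeasure lborel"])
qed

lemma emeasure_translate_Int_eq_nn_integral:
  assumes [measurable]: "B \<in> sets borel" "C \<in> sets borel"
  shows "emeasure lborel ({y. y - s \<in> B} \<inter> C) = (\<integral>\<^sup>+y. indicator B (y - s) * indicator C y \<partial>lborel)"
proof -
  have "emeasure lborel ({y. y - s \<in> B} \<inter> C) = (\<integral>\<^sup>+y. indicator ({y. y - s \<in> B} \<inter> C) y \<partial>lborel)"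
    by (rule nn_integral_indicator[symmetric]) measurable
  also have "\<dots> = (\<integral>\<^sup>+y. indicator B (y - s) * indicator C y \<partial>lborel)"
    by (intro nn_integral_cong) (auto split: split_indicator)
  finally show ?thesis .
qed

lemma nn_integral_emeasure_translate_Int_self:
  assumes [measurable]: "B \<in> sets borel"
  shows "(\<integral>\<^sup>+s. emeasure lborel ({y. y - s \<in> B} \<inter> B) \<partial>lborel) = emeasure lborel (B :: real set) ^ 2"
proof -
  have "(\<integral>\<^sup>+s. emeasure lborel ({y. y - s \<in> B} \<inter> B) \<partial>lborel)
      = (\<integral>\<^sup>+s. \<integral>\<^sup>+y. indicator B (y - s) * indicator B y \<partial>lborel \<partial>lborel)"
    by (simp add: emeasure_translate_Int_eq_nn_integral)
  also have "\<dots> = (\<integral>\<^sup>+y. \<integral>\<^sup>+s. indicator B (y - s) * indicator B y \<partial>lborel \<partial>lborel)"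
    by (rule lborel_pair.Fubini') measurable
  also have "\<dots> = (\<integral>\<^sup>+y. emeasure lborel B * indicator B y \<partial>lborel)"
  proof (intro nn_integral_cong)
    fix y :: real
    have "(\<integral>\<^sup>+s. indicator B (y - s) \<partial>lborel) = emeasure lborel B"
      using nn_integral_real_affine[of "indicator B" "-1" y] by simp
    then show "(\<integral>\<^sup>+s. indicator B (y - s) * indicator B y \<partial>lborel) = emeasure lborel B * indicator B y"
      by (simp add: nn_integral_multc)
  qed
  also have "\<dots> = emeasure lborel B ^ 2"
    by (simp add: nn_integral_cmult power2_eq_square)
  finally show ?thesis .
qed

lemma nn_integral_window_Int_translate:
  fixes u :: real
  assumes "\<bar>u\<bar> \<le> 1"
  shows "(\<integral>\<^sup>+y. indicator {-1..1} y * indicator {-1..1} (y - u) \<partial>lborel) = ennreal (2 - \<bar>u\<bar>)"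
proof -
  have "(\<integral>\<^sup>+y. indicator {-1..1} y * indicator {-1..1} (y - u) \<partial>lborel)
      = (\<integral>\<^sup>+y. indicator {max (-1) (u - 1) .. min 1 (u + 1)} y \<partial>lborel)"
    by (intro nn_integral_cong) (auto simp: indicator_def)
  also have "\<dots> = ennreal (min 1 (u + 1) - max (-1) (u - 1))"
    using assms by (simp add: abs_le_iff)
  also have "min 1 (u + 1) - max (-1) (u - 1) = 2 - \<bar>u\<bar>"
    using assms by (auto simp: min_def max_def abs_if)
  finally show ?thesis .
qed

lemma nn_integral_emeasure_translate_Int_window:
  assumes [measurable]: "B \<in> sets borel" and "B \<subseteq> {-1..1}"
  shows "(\<integral>\<^sup>+s. emeasure lborel ({y. y - s \<in> B} \<inter> {-1..1}) * indicator {-1..1} s \<partial>lborel)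
       = (\<integral>\<^sup>+u. indicator B u * ennreal (2 - \<bar>u\<bar>) \<partial>lborel)"
proof -
  let ?W = "{-1..1::real}"
  have "(\<integral>\<^sup>+s. emeasure lborel ({y. y - s \<in> B} \<inter> ?W) * indicator ?W s \<partial>lborel)
      = (\<integral>\<^sup>+s. \<integral>\<^sup>+y. indicator B (y - s) * indicator ?W y * indicator ?W s \<partial>lborel \<partial>lborel)"
    by (simp add: emeasure_translate_Int_eq_nn_integral nn_integral_multc)
  also have "\<dots> = (\<integral>\<^sup>+y. \<integral>\<^sup>+s. indicator B (y - s) * indicator ?W y * indicator ?W s \<partial>lborel \<partial>lborel)"
    by (rule lborel_pair.Fubini') measurable
  also have "\<dots> = (\<integral>\<^sup>+y. \<integral>\<^sup>+u. indicator B u * indicator ?W y * indicator ?W (y - u) \<partial>lborel \<partial>lborel)"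
  proof (rule nn_integral_cong)
    fix y :: real
    show "(\<integral>\<^sup>+s. indicator B (y - s) * indicator ?W y * indicator ?W s \<partial>lborel)
        = (\<integral>\<^sup>+u. indicator B u * indicator ?W y * indicator ?W (y - u) \<partial>lborel)"
      using nn_integral_real_affine[of "\<lambda>s. indicator B (y - s) * indicator ?W y * indicator ?W s" "-1" y]
      by simp
  qed
  also have "\<dots> = (\<integral>\<^sup>+u. \<integral>\<^sup>+y. indicator B u * indicator ?W y * indicator ?W (y - u) \<partial>lborel \<partial>lborel)"
    by (rule lborel_pair.Fubini') measurable
  also have "\<dots> = (\<integral>\<^sup>+u. indicator B u * ennreal (2 - \<bar>u\<bar>) \<partial>lborel)"
  proof (rule nn_integral_cong)
    fix u :: real
    show "(\<integral>\<^sup>+y. indicator B u * indicator ?W y * indicator ?W (y - u) \<partial>lborel)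
        = indicator B u * ennreal (2 - \<bar>u\<bar>)"
    proof (cases "u \<in> B")
      case True
      then have "\<bar>u\<bar> \<le> 1"
        using assms(2) by (auto simp: abs_le_iff)
      with True show ?thesis
        by (simp add: nn_integral_window_Int_translate mult.assoc)
    qed simp
  qed
  finally show ?thesis .
qed

lemma has_integral_max_abs_diff:
  fixes c :: real
  assumes "0 \<le> c" "c \<le> 1"
  shows "((\<lambda>u. max 0 (\<bar>u\<bar> - c)) has_integral (1 - c)\<^sup>2) {-1..1}"
proof -
  let ?f = "\<lambda>u::real. max 0 (\<bar>u\<bar> - c)"
  have "((\<lambda>u. u - c) has_integral ((\<lambda>u. (u - c)\<^sup>2 / 2) 1 - (\<lambda>u. (u - c)\<^sup>2 / 2) c)) {c..1}"
    using assms
    by (intro fundamental_theorem_of_calculus)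
       (auto simp: has_real_derivative_iff_has_vector_derivative[symmetric] intro!: derivative_eq_intros)
  then have right: "(?f has_integral (1 - c)\<^sup>2 / 2) {c..1}"
    by (subst has_integral_cong[where g="\<lambda>u. u - c"]) (use assms in auto)
  then have left: "(?f has_integral (1 - c)\<^sup>2 / 2) {-1..-c}"
    by (subst has_integral_reflect_real[symmetric]) simp
  have middle: "(?f has_integral 0) {-c..c}"
    using has_integral_0 by (subst has_integral_cong[where g="\<lambda>_. 0"]) auto
  have "(?f has_integral ((1 - c)\<^sup>2 / 2 + 0)) {-1..c}"
    by (rule has_integral_combine[OF _ _ left middle]) (use assms in auto)
  then have "(?f has_integral ((1 - c)\<^sup>2 / 2 + 0 + (1 - c)\<^sup>2 / 2)) {-1..1}"
    by (intro has_integral_combine[OF _ _ _ right]) (use assms in auto)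
  then show ?thesis
    by simp
qed

lemma nn_integral_triangle_weight_ge:
  assumes [measurable]: "B \<in> sets borel" and B: "B \<subseteq> {-1..1}"
    and b: "emeasure lborel B = ennreal b" "0 \<le> b" "b \<le> 2"
  shows "ennreal (b + b\<^sup>2 / 4) \<le> (\<integral>\<^sup>+u. indicator B u * ennreal (2 - \<bar>u\<bar>) \<partial>lborel)"
proof -
  define c where "c = 1 - b / 2"
  have c: "0 \<le> c" "c \<le> 1"
    using b by (auto simp: c_def)
  \<comment> \<open>Bathtub principle: the weight \<open>2 - \<bar>u\<bar>\<close> is smallest on \<open>{c \<le> \<bar>u\<bar>}\<close>, a set of measure b.\<close>
  have pointwise: "ennreal ((2 - c) * indicator B u)
      \<le> indicator B u * ennreal (2 - \<bar>u\<bar>) + ennreal (indicator {-1..1} u * max 0 (\<bar>u\<bar> - c))" for u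
  proof (cases "u \<in> B")
    case True
    then have "\<bar>u\<bar> \<le> 1"
      using B by (auto simp: abs_le_iff)
    then have "ennreal (2 - c) \<le> ennreal (2 - \<bar>u\<bar> + max 0 (\<bar>u\<bar> - c))"
      by (intro ennreal_leI) (auto simp: max_def)
    also have "\<dots> = ennreal (2 - \<bar>u\<bar>) + ennreal (max 0 (\<bar>u\<bar> - c))"
      using \<open>\<bar>u\<bar> \<le> 1\<close> by (intro ennreal_plus) auto
    finally show ?thesis
      using True B by auto
  qed simp
  have "ennreal ((2 - c) * b) = (\<integral>\<^sup>+u. ennreal ((2 - c) * indicator B u) \<partial>lborel)"
    using b c by (simp add: nn_integral_cmult_indicator ennreal_mult ennreal_indicator)
  also have "\<dots> \<le> (\<integral>\<^sup>+u. indicator B u * ennreal (2 - \<bar>u\<bar>)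
      + ennreal (indicator {-1..1} u * max 0 (\<bar>u\<bar> - c)) \<partial>lborel)"
    by (intro nn_integral_mono pointwise)
  also have "\<dots> = (\<integral>\<^sup>+u. indicator B u * ennreal (2 - \<bar>u\<bar>) \<partial>lborel) + ennreal ((1 - c)\<^sup>2)"
    using nn_integral_has_integral_lebesgue[OF _ has_integral_max_abs_diff[OF c]]
    by (subst nn_integral_add) auto
  finally have "ennreal ((2 - c) * b) \<le> (\<integral>\<^sup>+u. indicator B u * ennreal (2 - \<bar>u\<bar>) \<partial>lborel) + ennreal ((1 - c)\<^sup>2)" .
  moreover have "(2 - c) * b = (b + b\<^sup>2 / 4) + (1 - c)\<^sup>2"
    by (simp add: c_def power2_eq_square algebra_simps)
  ultimately have "ennreal ((1 - c)\<^sup>2) + ennreal (b + b\<^sup>2 / 4)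
      \<le> ennreal ((1 - c)\<^sup>2) + (\<integral>\<^sup>+u. indicator B u * ennreal (2 - \<bar>u\<bar>) \<partial>lborel)"
    using b by (simp add: add.commute)
  then show ?thesis
    by (simp add: ennreal_add_left_cancel_le)
qed

definition p_beta :: "real \<Rightarrow> real" where
  "p_beta \<beta> = 1 - 7 / (8 * (1 - \<beta>))"

lemma p_beta_eq: "\<beta> < 1 \<Longrightarrow> p_beta \<beta> = (1/8 - \<beta>) / (1 - \<beta>)"
  by (simp add: p_beta_def field_simps)

lemma p_beta_pos: "0 < \<beta> \<Longrightarrow> \<beta> < 1/8 \<Longrightarrow> 0 < p_beta \<beta>"
  by (simp add: p_beta_eq)

lemma p_beta_le_1: "0 < \<beta> \<Longrightarrow> \<beta> < 1/8 \<Longrightarrow> p_beta \<beta> \<le> 1"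
  by (simp add: p_beta_eq)

lemma emeasure_Un_translate_window_ge_iff:
  fixes B :: "real set"
  assumes [measurable]: "B \<in> sets borel" and B: "B \<subseteq> {-1..1}"
    and b: "emeasure lborel B = ennreal b" "0 \<le> b" and "0 \<le> \<beta>"
  shows "ennreal (1 + \<beta>) * emeasure lborel B \<le> emeasure lborel (B \<union> {y. y - s \<in> B} \<inter> {-1..1})
    \<longleftrightarrow> ennreal (\<beta> * b) + emeasure lborel ({y. y - s \<in> B} \<inter> B)
        \<le> emeasure lborel ({y. y - s \<in> B} \<inter> {-1..1})"
proof -
  let ?Ga = "emeasure lborel ({y. y - s \<in> B} \<inter> {-1..1})"
  let ?Gb = "emeasure lborel ({y. y - s \<in> B} \<inter> B)"
  let ?U = "emeasure lborel (B \<union> {y. y - s \<in> B} \<inter> {-1..1})"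
  have "?Gb \<le> emeasure lborel B"
    by (intro emeasure_mono) auto
  then have Gb_finite: "?Gb \<noteq> \<top>"
    using b by (auto simp: top_unique)
  have "B \<inter> ({y. y - s \<in> B} \<inter> {-1..1}) = {y. y - s \<in> B} \<inter> B"
    using B by auto
  then have union: "?U + ?Gb = ennreal b + ?Ga"
    using emeasure_Un_Int[of B lborel "{y. y - s \<in> B} \<inter> {-1..1}"] by (simp add: b)
  have "ennreal (1 + \<beta>) * emeasure lborel B = ennreal b + ennreal (\<beta> * b)"
    using b \<open>0 \<le> \<beta>\<close> by (simp add: ennreal_mult[symmetric] distrib_right)
  then have "ennreal (1 + \<beta>) * emeasure lborel B \<le> ?U \<longleftrightarrow> ?Gb + (ennreal b + ennreal (\<beta> * b)) \<le> ?Gb + ?U"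
    by (simp add: ennreal_add_left_cancel_le Gb_finite)
  also have "\<dots> \<longleftrightarrow> ennreal b + (ennreal (\<beta> * b) + ?Gb) \<le> ennreal b + ?Ga"
    using union by (simp only: ac_simps)
  also have "\<dots> \<longleftrightarrow> ennreal (\<beta> * b) + ?Gb \<le> ?Ga"
    by (simp add: ennreal_add_left_cancel_le)
  finally show ?thesis .
qed

lemma nn_integral_unif_emeasure_translate_window_ge:
  assumes [measurable]: "B \<in> sets borel" and "B \<subseteq> {-1..1}"
    and b: "emeasure lborel B = ennreal b" "0 \<le> b" "b \<le> 2"
  shows "ennreal ((b + b\<^sup>2 / 4) / 2) \<le> (\<integral>\<^sup>+s. emeasure lborel ({y. y - s \<in> B} \<inter> {-1..1}) \<partial>unif)"
proof -
  have "ennreal ((b + b\<^sup>2 / 4) / 2) \<le> (\<integral>\<^sup>+u. indicator B u * ennreal (2 - \<bar>u\<bar>) \<partial>lborel) / 2"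
    using nn_integral_triangle_weight_ge[OF assms] b
    by (simp add: divide_right_mono_ennreal flip: divide_ennreal)
  also have "\<dots> = (\<integral>\<^sup>+s. emeasure lborel ({y. y - s \<in> B} \<inter> {-1..1}) \<partial>unif)"
    using assms(2)
    by (simp add: nn_integral_unif borel_measurable_emeasure_translate_Int nn_integral_emeasure_translate_Int_window)
  finally show ?thesis .
qed

lemma nn_integral_unif_emeasure_translate_self_le:
  assumes [measurable]: "B \<in> sets borel" and b: "emeasure lborel B = ennreal b" "0 \<le> b"
  shows "(\<integral>\<^sup>+s. emeasure lborel ({y. y - s \<in> B} \<inter> B) \<partial>unif) \<le> ennreal (b\<^sup>2 / 2)"
proof -
  have "(\<integral>\<^sup>+s. emeasure lborel ({y. y - s \<in> B} \<inter> B) \<partial>unif)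
      \<le> (\<integral>\<^sup>+s. emeasure lborel ({y. y - s \<in> B} \<inter> B) \<partial>lborel) / 2"
    by (simp add: nn_integral_unif borel_measurable_emeasure_translate_Int divide_right_mono_ennreal
        nn_integral_mono mult_left_le split: split_indicator)
  also have "\<dots> = ennreal (b\<^sup>2 / 2)"
    using b by (simp add: nn_integral_emeasure_translate_Int_self ennreal_power ennreal_divide_numeral)
  finally show ?thesis .
qed

lemma p_beta_le_of_mean_bound:
  assumes b: "0 < b" "b \<le> 1" and "\<beta> < 1"
    and mean: "(b + b\<^sup>2 / 4) / 2 \<le> b\<^sup>2 / 2 + \<beta> * b + (1 - \<beta>) * b * P"
  shows "p_beta \<beta> \<le> P"
proof -
  have "(b + b\<^sup>2 / 4) / 2 = b * ((1 + b / 4) / 2)"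
    "b\<^sup>2 / 2 + \<beta> * b + (1 - \<beta>) * b * P = b * (b / 2 + \<beta> + (1 - \<beta>) * P)"
    by (simp_all add: power2_eq_square field_simps)
  with mean have "(1 + b / 4) / 2 \<le> b / 2 + \<beta> + (1 - \<beta>) * P"
    using b by (simp add: mult_le_cancel_left_pos)
  then have "1/8 - \<beta> \<le> (1 - \<beta>) * P"
    using b by (simp add: field_simps)
  then show ?thesis
    using \<open>\<beta> < 1\<close> by (simp add: p_beta_eq field_simps)
qed

lemma translate_gain_mean_bound:
  fixes B :: "real set"
  assumes [measurable]: "B \<in> sets borel" and B: "B \<subseteq> {-1..1}"
    and b: "emeasure lborel B = ennreal b" "0 \<le> b" "b \<le> 2" and \<beta>: "0 \<le> \<beta>" "\<beta> \<le> 1"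
  defines "E \<equiv> {s. ennreal (\<beta> * b) + emeasure lborel ({y. y - s \<in> B} \<inter> B)
                   \<le> emeasure lborel ({y. y - s \<in> B} \<inter> {-1..1})}"
  shows "E \<in> sets borel" and "(b + b\<^sup>2 / 4) / 2 \<le> b\<^sup>2 / 2 + \<beta> * b + (1 - \<beta>) * b * measure unif E"
proof -
  define Ga where "Ga s = emeasure lborel ({y. y - s \<in> B} \<inter> {-1..1})" for s
  define Gb where "Gb s = emeasure lborel ({y. y - s \<in> B} \<inter> B)" for s
  interpret U: prob_space unif
    by (rule prob_space_unif)
  have [measurable]: "Ga \<in> borel_measurable unif" "Gb \<in> borel_measurable unif"
    unfolding Ga_def[abs_def] Gb_def[abs_def] measurable_cong_sets[OF sets_uniform_measure refl]
    by (simp_all add: borel_measurable_emeasure_translate_Int)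
  have E_unif: "E \<in> sets unif"
    unfolding E_def Ga_def[symmetric] Gb_def[symmetric] by measurable
  then show "E \<in> sets borel"
    by simp
  have pointwise: "Ga s \<le> Gb s + ennreal (\<beta> * b) + ennreal ((1 - \<beta>) * b) * indicator E s" for s
  proof (cases "s \<in> E")
    case True
    have "Ga s \<le> emeasure lborel {y. y - s \<in> B}"
      unfolding Ga_def by (intro emeasure_mono) auto
    also have "\<dots> = ennreal (\<beta> * b + (1 - \<beta>) * b)"
      by (simp add: emeasure_lborel_translate b algebra_simps)
    also have "\<dots> \<le> Gb s + ennreal (\<beta> * b) + ennreal ((1 - \<beta>) * b) * indicator E s"
      using True b \<beta> by (simp add: add_increasing)
    finally show ?thesis .
  qed (simp add: E_def Ga_def Gb_def add.commute)
  define P where "P = measure unif E"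
  have P: "emeasure unif E = ennreal P" "0 \<le> P"
    by (simp_all add: P_def U.emeasure_eq_measure)
  have "ennreal ((b + b\<^sup>2 / 4) / 2) \<le> (\<integral>\<^sup>+s. Ga s \<partial>unif)"
    unfolding Ga_def using b by (intro nn_integral_unif_emeasure_translate_window_ge B) auto
  also have "\<dots> \<le> (\<integral>\<^sup>+s. Gb s + ennreal (\<beta> * b) + ennreal ((1 - \<beta>) * b) * indicator E s \<partial>unif)"
    by (intro nn_integral_mono pointwise)
  also have "\<dots> = (\<integral>\<^sup>+s. Gb s \<partial>unif) + ennreal (\<beta> * b) + ennreal ((1 - \<beta>) * b) * ennreal P"
    using E_unif by (simp add: nn_integral_add nn_integral_cmult_indicator U.emeasure_space_1 P)
  also have "(\<integral>\<^sup>+s. Gb s \<partial>unif) \<le> ennreal (b\<^sup>2 / 2)"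
    unfolding Gb_def using b by (intro nn_integral_unif_emeasure_translate_self_le) auto
  finally have "ennreal ((b + b\<^sup>2 / 4) / 2) \<le> ennreal (b\<^sup>2 / 2 + \<beta> * b + (1 - \<beta>) * b * P)"
    using b \<beta> P by (simp add: ennreal_mult)
  then show "(b + b\<^sup>2 / 4) / 2 \<le> b\<^sup>2 / 2 + \<beta> * b + (1 - \<beta>) * b * measure unif E"
    using b \<beta> P by (subst (asm) ennreal_le_iff) (auto simp: P_def)
qed

lemma prob_translate_enlarges:
  fixes B :: "real set"
  assumes [measurable]: "B \<in> sets borel" and B: "B \<subseteq> {-1..1}" "emeasure lborel B \<le> 1"
    and \<beta>: "0 < \<beta>" "\<beta> < 1/8"
  defines "E \<equiv> {s. ennreal (1 + \<beta>) * emeasure lborel B \<le> emeasure lborel (B \<union> {y. y - s \<in> B} \<inter> {-1..1})}"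
  shows "E \<in> sets borel" and "p_beta \<beta> \<le> measure unif E"
proof -
  obtain b where b: "emeasure lborel B = ennreal b" "0 \<le> b" "b \<le> 1"
    using B(2) by (metis emeasure_eq_ennreal_measure ennreal_le_1 measure_nonneg neq_top_trans ennreal_one_neq_top)
  have E_eq: "E = {s. ennreal (\<beta> * b) + emeasure lborel ({y. y - s \<in> B} \<inter> B)
                       \<le> emeasure lborel ({y. y - s \<in> B} \<inter> {-1..1})}"
    unfolding E_def using emeasure_Un_translate_window_ge_iff[OF _ B(1) b(1,2)] \<beta> by simp
  note mean = translate_gain_mean_bound[OF _ B(1) b(1,2), of \<beta>, folded E_eq]
  show "E \<in> sets borel"
    using mean(1) b \<beta> by simp
  show "p_beta \<beta> \<le> measure unif E"
  proof (cases "b = 0")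
    case True
    have "emeasure lborel ({y. y - s \<in> B} \<inter> B) \<le> emeasure lborel ({y. y - s \<in> B} \<inter> {-1..1})" for s
      using B(1) by (intro emeasure_mono) auto
    then have "E = UNIV"
      unfolding E_eq using True by simp
    then show ?thesis
      using p_beta_le_1[OF \<beta>] prob_space.prob_space[OF prob_space_unif] by simp
  next
    case False
    then show ?thesis
      using p_beta_le_of_mean_bound[OF _ b(3) _ mean(2)] b \<beta> by simp
  qed
qed

lemma approx_v_growth_event:
  assumes v: "approx_v e x t \<le> 1/2" and \<beta>: "0 < \<beta>" "\<beta> < 1/8"
  obtains E where "E \<in> sets borel" "p_beta \<beta> \<le> measure unif E"
    "\<And>y. y \<in> E \<Longrightarrow> (1 + \<beta>) * approx_v e x t \<le> approx_v e (x(t := y)) (Suc t)"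
proof -
  define A where "A = approx_set e x t"
  define B where "B = A \<inter> {-1..1}"
  have B: "B \<in> sets borel" "B \<subseteq> {-1..1}" "emeasure lborel B = ennreal (2 * approx_v e x t)"
    by (auto simp: A_def B_def emeasure_approx_set_window)
  then have "emeasure lborel B \<le> 1"
    using v by simp
  note enlarges = prob_translate_enlarges[OF B(1,2) this \<beta>]
  show ?thesis
  proof (rule that[OF enlarges])
    fix y
    assume "y \<in> {s. ennreal (1 + \<beta>) * emeasure lborel B \<le> emeasure lborel (B \<union> {w. w - s \<in> B} \<inter> {-1..1})}"
    then have "ennreal (1 + \<beta>) * emeasure lborel B \<le> emeasure lborel (B \<union> {w. w - y \<in> B} \<inter> {-1..1})"
      by simp
    also have "\<dots> \<le> emeasure lborel (approx_set e (x(t := y)) (Suc t) \<inter> {-1..1})"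
    proof (rule emeasure_mono)
      have "approx_set e (x(t := y)) t = A"
        unfolding A_def by (rule approx_set_cong) simp
      then show "B \<union> {w. w - y \<in> B} \<inter> {-1..1} \<subseteq> approx_set e (x(t := y)) (Suc t) \<inter> {-1..1}"
        by (auto simp: approx_set_Suc B_def)
    qed simp
    finally have "ennreal ((1 + \<beta>) * (2 * approx_v e x t)) \<le> ennreal (2 * approx_v e (x(t := y)) (Suc t))"
      using \<beta> approx_v_nonneg[of e x t] by (simp add: B(3) emeasure_approx_set_window ennreal_mult)
    then show "(1 + \<beta>) * approx_v e x t \<le> approx_v e (x(t := y)) (Suc t)"
      using approx_v_nonneg[of e "x(t := y)" "Suc t"] by (simp add: ennreal_le_iff)
  qed
qed

section \<open>Counting the successful steps\<close>

text \<open>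
  Step \<open>s\<close> counts as a success if \<open>v\<^sub>s\<close> already exceeds \<open>1/2\<close> or grows by the factor \<open>1 + \<beta>\<close>;
  the first alternative makes the conditional success probability at least \<open>p_beta \<beta>\<close> in every case.
\<close>
definition growth_ind :: "real \<Rightarrow> real \<Rightarrow> nat \<Rightarrow> (nat \<Rightarrow> real) \<Rightarrow> real" where
  "growth_ind e \<beta> s x =
     (if 1/2 < approx_v e x s \<or> (1 + \<beta>) * approx_v e x s \<le> approx_v e x (Suc s) then 1 else 0)"

lemma growth_ind_nonneg: "0 \<le> growth_ind e \<beta> s x"
  by (simp add: growth_ind_def)

lemma growth_ind_cong:
  assumes "\<And>i. i \<le> s \<Longrightarrow> x i = x' i"
  shows "growth_ind e \<beta> s x = growth_ind e \<beta> s x'"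
  using assms approx_v_cong[of s x x' e] approx_v_cong[of "Suc s" x x' e]
  by (simp add: growth_ind_def)

lemma borel_measurable_growth_ind:
  assumes "\<And>i. i \<le> s \<Longrightarrow> (\<lambda>w. g w i) \<in> borel_measurable N"
  shows "(\<lambda>w. growth_ind e \<beta> s (g w)) \<in> borel_measurable N"
proof -
  have [measurable]: "(\<lambda>w. approx_v e (g w) s) \<in> borel_measurable N"
    "(\<lambda>w. approx_v e (g w) (Suc s)) \<in> borel_measurable N"
    using assms by (auto intro!: borel_measurable_approx_v)
  show ?thesis
    unfolding growth_ind_def by measurable
qed

lemma (in prob_space) nn_integral_exp_neg_le_of_prob:
  assumes "A \<in> events" "p \<le> prob A" "\<And>x. x \<in> A \<Longrightarrow> Y x = 1" "\<And>x. 0 \<le> Y x" "0 \<le> l"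
  shows "(\<integral>\<^sup>+x. ennreal (exp (- l * Y x)) \<partial>M) \<le> ennreal (1 - p + p * exp (- l))"
proof -
  have "(\<integral>\<^sup>+x. ennreal (exp (- l * Y x)) \<partial>M)
      \<le> (\<integral>\<^sup>+x. ennreal (exp (- l)) * indicator A x + indicator (space M - A) x \<partial>M)"
  proof (rule nn_integral_mono)
    fix x
    assume "x \<in> space M"
    moreover have "exp (- l * Y x) \<le> 1"
      using assms(4,5) by (simp add: mult_nonneg_nonneg)
    ultimately show "ennreal (exp (- l * Y x)) \<le> ennreal (exp (- l)) * indicator A x + indicator (space M - A) x"
      using assms(3) by (cases "x \<in> A") auto
  qed
  also have "\<dots> = ennreal (exp (- l) * prob A + (1 - prob A))"
    using assms(1) by (simp add: nn_integral_add nn_integral_cmult_indicator emeasure_eq_measure prob_compl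
        ennreal_mult ennreal_plus)
  also have "\<dots> \<le> ennreal (1 - p + p * exp (- l))"
  proof (rule ennreal_leI)
    have "p * (1 - exp (- l)) \<le> prob A * (1 - exp (- l))"
      using assms(2,5) by (intro mult_right_mono) auto
    then show "exp (- l) * prob A + (1 - prob A) \<le> 1 - p + p * exp (- l)"
      by (simp add: algebra_simps)
  qed
  finally show ?thesis .
qed

lemma nn_integral_exp_growth_ind_le:
  assumes \<beta>: "0 < \<beta>" "\<beta> < 1/8" and "0 \<le> l"
  shows "(\<integral>\<^sup>+y. ennreal (exp (- l * growth_ind e \<beta> t (x(t := y)))) \<partial>unif)
    \<le> ennreal (1 - p_beta \<beta> + p_beta \<beta> * exp (- l))"
proof -
  interpret U: prob_space unif
    by (rule prob_space_unif)
  have v_t: "approx_v e (x(t := y)) t = approx_v e x t" for y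
    by (rule approx_v_cong) simp
  show ?thesis
  proof (cases "1/2 < approx_v e x t")
    case True
    then have "growth_ind e \<beta> t (x(t := y)) = 1" for y
      by (simp add: growth_ind_def v_t)
    moreover have "p_beta \<beta> \<le> measure unif UNIV"
      using p_beta_le_1[OF \<beta>] U.prob_space by simp
    ultimately show ?thesis
      using assms(3) by (intro U.nn_integral_exp_neg_le_of_prob[where A=UNIV]) (simp_all add: growth_ind_nonneg)
  next
    case False
    then have "approx_v e x t \<le> 1/2"
      by simp
    then obtain E where "E \<in> sets borel" "p_beta \<beta> \<le> measure unif E"
      "\<And>y. y \<in> E \<Longrightarrow> (1 + \<beta>) * approx_v e x t \<le> approx_v e (x(t := y)) (Suc t)"
      using approx_v_growth_event[OF _ \<beta>] by metis
    then show ?thesis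
      using assms(3) by (intro U.nn_integral_exp_neg_le_of_prob[where A=E])
        (simp_all add: growth_ind_def v_t growth_ind_nonneg)
  qed
qed

lemma nn_integral_exp_neg_sum_update_le:
  fixes N :: "'a measure" and Y :: "nat \<Rightarrow> (nat \<Rightarrow> 'a) \<Rightarrow> real"
  assumes x: "x \<in> space (Pi\<^sub>M {..<n} (\<lambda>_. N))"
    and Y_meas: "Y n \<in> borel_measurable (Pi\<^sub>M (insert n {..<n}) (\<lambda>_. N))"
    and Y_cong: "\<And>s x x'. (\<And>i. i \<le> s \<Longrightarrow> x i = x' i) \<Longrightarrow> Y s x = Y s x'"
    and Y_step: "(\<integral>\<^sup>+y. ennreal (exp (- Y n (x(n := y)))) \<partial>N) \<le> ennreal q"
  shows "(\<integral>\<^sup>+y. ennreal (exp (- (\<Sum>s<Suc n. Y s (x(n := y))))) \<partial>N)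
    \<le> ennreal (exp (- (\<Sum>s<n. Y s x))) * ennreal q"
proof -
  from x Y_meas have [measurable]: "(\<lambda>y. Y n (x(n := y))) \<in> borel_measurable N"
    by (intro measurable_compose[where f="\<lambda>y. x(n := y)" and g="Y n"] measurable_component_update) auto
  have "(\<Sum>s<n. Y s (x(n := y))) = (\<Sum>s<n. Y s x)" for y
    by (intro sum.cong refl Y_cong) auto
  then have split: "exp (- (\<Sum>s<Suc n. Y s (x(n := y))))
      = exp (- (\<Sum>s<n. Y s x)) * exp (- Y n (x(n := y)))" for y
    by (simp add: exp_add[symmetric])
  have "(\<integral>\<^sup>+y. ennreal (exp (- (\<Sum>s<Suc n. Y s (x(n := y))))) \<partial>N)
      = ennreal (exp (- (\<Sum>s<n. Y s x))) * (\<integral>\<^sup>+y. ennreal (exp (- Y n (x(n := y)))) \<partial>N)"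
    unfolding split by (simp add: ennreal_mult nn_integral_cmult)
  also have "\<dots> \<le> ennreal (exp (- (\<Sum>s<n. Y s x))) * ennreal q"
    using Y_step by (rule mult_left_mono) simp
  finally show ?thesis .
qed

lemma nn_integral_exp_neg_sum_le_power:
  fixes N :: "'a measure" and Y :: "nat \<Rightarrow> (nat \<Rightarrow> 'a) \<Rightarrow> real"
  assumes N: "prob_space N" and q: "0 \<le> q"
    and Y_meas: "\<And>s J. {..s} \<subseteq> J \<Longrightarrow> Y s \<in> borel_measurable (Pi\<^sub>M J (\<lambda>_. N))"
    and Y_cong: "\<And>s x x'. (\<And>i. i \<le> s \<Longrightarrow> x i = x' i) \<Longrightarrow> Y s x = Y s x'"
    and Y_step: "\<And>s x. (\<integral>\<^sup>+y. ennreal (exp (- Y s (x(s := y)))) \<partial>N) \<le> ennreal q"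
  shows "(\<integral>\<^sup>+x. ennreal (exp (- (\<Sum>s<n. Y s x))) \<partial>Pi\<^sub>M {..<n} (\<lambda>_. N)) \<le> ennreal (q ^ n)"
proof (induction n)
  case 0
  interpret prob_space "Pi\<^sub>M {..<0::nat} (\<lambda>_. N)"
    using N by (rule prob_space_PiM)
  show ?case
    using emeasure_space_1 by simp
next
  case (Suc n)
  interpret product_sigma_finite "\<lambda>_::nat. N"
    using N by (simp add: product_sigma_finite_def prob_space_imp_sigma_finite)
  have [measurable]: "(\<lambda>x. \<Sum>s<n. Y s x) \<in> borel_measurable (Pi\<^sub>M {..<n} (\<lambda>_. N))"
    "(\<lambda>x. \<Sum>s\<in>insert n {..<n}. Y s x) \<in> borel_measurable (Pi\<^sub>M (insert n {..<n}) (\<lambda>_. N))"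
    by (intro borel_measurable_sum Y_meas; auto)+
  have "(\<integral>\<^sup>+x. ennreal (exp (- (\<Sum>s<Suc n. Y s x))) \<partial>Pi\<^sub>M {..<Suc n} (\<lambda>_. N))
      = (\<integral>\<^sup>+x. \<integral>\<^sup>+y. ennreal (exp (- (\<Sum>s<Suc n. Y s (x(n := y))))) \<partial>N \<partial>Pi\<^sub>M {..<n} (\<lambda>_. N))"
    unfolding lessThan_Suc[of n] by (rule product_nn_integral_insert) measurable
  also have "\<dots> \<le> (\<integral>\<^sup>+x. ennreal (exp (- (\<Sum>s<n. Y s x))) * ennreal q \<partial>Pi\<^sub>M {..<n} (\<lambda>_. N))"
    by (intro nn_integral_mono nn_integral_exp_neg_sum_update_le Y_meas Y_cong Y_step) auto
  also have "\<dots> = (\<integral>\<^sup>+x. ennreal (exp (- (\<Sum>s<n. Y s x))) \<partial>Pi\<^sub>M {..<n} (\<lambda>_. N)) * ennreal q"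
    by (rule nn_integral_multc) measurable
  also have "\<dots> \<le> ennreal (q ^ n) * ennreal q"
    using Suc.IH by (rule mult_right_mono) simp
  also have "\<dots> = ennreal (q ^ Suc n)"
    using q by (simp add: ennreal_mult[symmetric] mult.commute)
  finally show ?case .
qed

lemma approx_v_ge_powr_sum_growth_ind:
  assumes e: "0 < e" "e \<le> 1" and \<beta>: "0 < \<beta>" and v: "\<And>s. s < m \<Longrightarrow> approx_v e x s \<le> 1/2"
  shows "e * (1 + \<beta>) powr (\<Sum>s<m. growth_ind e \<beta> s x) \<le> approx_v e x m"
  using v
proof (induction m)
  case 0
  then show ?case
    using e by (simp add: approx_v_0)
next
  case (Suc m)
  then have IH: "e * (1 + \<beta>) powr (\<Sum>s<m. growth_ind e \<beta> s x) \<le> approx_v e x m"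
    by simp
  show ?case
  proof (cases "(1 + \<beta>) * approx_v e x m \<le> approx_v e x (Suc m)")
    case True
    have "e * (1 + \<beta>) powr (\<Sum>s<Suc m. growth_ind e \<beta> s x)
        = (e * (1 + \<beta>) powr (\<Sum>s<m. growth_ind e \<beta> s x)) * (1 + \<beta>)"
      using True \<beta> by (simp add: growth_ind_def powr_add)
    also have "\<dots> \<le> (1 + \<beta>) * approx_v e x m"
      using IH \<beta> by (simp add: mult.commute)
    finally show ?thesis
      using True by linarith
  next
    case False
    moreover have "approx_v e x m \<le> 1/2"
      using Suc.prems by simp
    ultimately have "e * (1 + \<beta>) powr (\<Sum>s<Suc m. growth_ind e \<beta> s x)
        = e * (1 + \<beta>) powr (\<Sum>s<m. growth_ind e \<beta> s x)"
      by (simp add: growth_ind_def)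
    then show ?thesis
      using IH approx_v_Suc_ge[of e x m] by linarith
  qed
qed

lemma sum_growth_ind_le_log:
  assumes e: "0 < e" and \<beta>: "0 < \<beta>" and v: "\<And>s. s \<le> n \<Longrightarrow> approx_v e x s \<le> 1/2"
  shows "(\<Sum>s<n. growth_ind e \<beta> s x) \<le> ln (1 / (2 * e)) / ln (1 + \<beta>)"
proof -
  have "e \<le> 1/2"
    using v[of 0] approx_v_0[OF e, of x] by simp
  then have "e * (1 + \<beta>) powr (\<Sum>s<n. growth_ind e \<beta> s x) \<le> approx_v e x n"
    using e \<beta> v by (intro approx_v_ge_powr_sum_growth_ind) auto
  also have "\<dots> \<le> 1/2"
    using v by simp
  finally have "e * (1 + \<beta>) powr (\<Sum>s<n. growth_ind e \<beta> s x) \<le> 1/2" .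
  then have "(1 + \<beta>) powr (\<Sum>s<n. growth_ind e \<beta> s x) \<le> 1 / (2 * e)"
    using e by (simp add: field_simps)
  then have "ln ((1 + \<beta>) powr (\<Sum>s<n. growth_ind e \<beta> s x)) \<le> ln (1 / (2 * e))"
    using e \<beta> by (subst ln_le_cancel_iff) auto
  then have "(\<Sum>s<n. growth_ind e \<beta> s x) * ln (1 + \<beta>) \<le> ln (1 / (2 * e))"
    using \<beta> by (simp add: ln_powr)
  then show ?thesis
    using \<beta> by (simp add: pos_le_divide_eq)
qed

lemma bernoulli_mgf_le_exp:
  fixes p l :: real
  assumes "0 \<le> l" "p \<le> 1"
  shows "1 - p + p * exp (- l) \<le> exp (l\<^sup>2 / 8 - l * p)"
proof -
  have pos: "0 < 1 + (1 - p) * (exp l - 1)"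
    using assms by (smt (verit) mult_nonneg_nonneg one_le_exp_iff)
  have "ln (1 + (1 - p) * (exp l - 1)) \<le> l\<^sup>2 / 8 + l * (1 - p)"
    using Hoeffdings_lemma_aux[of l "1 - p"] assms by simp
  then have "1 + (1 - p) * (exp l - 1) \<le> exp (l\<^sup>2 / 8 + l * (1 - p))"
    using pos by (metis exp_le_cancel_iff exp_ln)
  then have "exp (- l) * (1 + (1 - p) * (exp l - 1)) \<le> exp (- l) * exp (l\<^sup>2 / 8 + l * (1 - p))"
    by simp
  then show ?thesis
    by (simp add: algebra_simps exp_minus_inverse flip: exp_add)
qed

lemma borel_measurable_component_unif:
  "i \<in> J \<Longrightarrow> (\<lambda>x. x i) \<in> borel_measurable (Pi\<^sub>M J (\<lambda>_. unif))"
  using measurable_component_singleton[of i J "\<lambda>_. unif"]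
  by (simp add: measurable_cong_sets[OF refl sets_uniform_measure])

lemma borel_measurable_growth_ind_PiM:
  assumes "{..s} \<subseteq> J"
  shows "growth_ind e \<beta> s \<in> borel_measurable (Pi\<^sub>M J (\<lambda>_. unif))"
  using assms borel_measurable_growth_ind[of s "\<lambda>x. x" "Pi\<^sub>M J (\<lambda>_. unif)" e \<beta>]
  by (auto intro: borel_measurable_component_unif)

lemma nn_integral_exp_neg_sum_growth_ind_le:
  assumes \<beta>: "0 < \<beta>" "\<beta> < 1/8" and l: "0 \<le> l"
  shows "(\<integral>\<^sup>+x. ennreal (exp (- l * (\<Sum>s<n. growth_ind e \<beta> s x))) \<partial>Pi\<^sub>M {..<n} (\<lambda>_. unif))
    \<le> ennreal ((1 - p_beta \<beta> + p_beta \<beta> * exp (- l)) ^ n)"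
proof -
  have "(\<integral>\<^sup>+x. ennreal (exp (- (\<Sum>s<n. l * growth_ind e \<beta> s x))) \<partial>Pi\<^sub>M {..<n} (\<lambda>_. unif))
      \<le> ennreal ((1 - p_beta \<beta> + p_beta \<beta> * exp (- l)) ^ n)"
  proof (rule nn_integral_exp_neg_sum_le_power[OF prob_space_unif])
    show "0 \<le> 1 - p_beta \<beta> + p_beta \<beta> * exp (- l)"
      using p_beta_pos[OF \<beta>] p_beta_le_1[OF \<beta>] by (simp add: add_nonneg_nonneg)
    fix s :: nat and J
    assume "{..s} \<subseteq> J"
    from borel_measurable_growth_ind_PiM[OF this]
    show "(\<lambda>x. l * growth_ind e \<beta> s x) \<in> borel_measurable (Pi\<^sub>M J (\<lambda>_. unif))"
      by measurable
  next
    fix s :: nat and x x' :: "nat \<Rightarrow> real"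
    assume "\<And>i. i \<le> s \<Longrightarrow> x i = x' i"
    then show "l * growth_ind e \<beta> s x = l * growth_ind e \<beta> s x'"
      using growth_ind_cong[of s x x'] by simp
  next
    fix s :: nat and x :: "nat \<Rightarrow> real"
    show "(\<integral>\<^sup>+y. ennreal (exp (- (l * growth_ind e \<beta> s (x(s := y))))) \<partial>unif)
        \<le> ennreal (1 - p_beta \<beta> + p_beta \<beta> * exp (- l))"
      using nn_integral_exp_growth_ind_le[OF \<beta> l] by simp
  qed
  then show ?thesis
    by (simp add: sum_distrib_left sum_negf)
qed

lemma emeasure_le_exp_mult_nn_integral_exp:
  assumes [measurable]: "S \<in> borel_measurable M" and "0 \<le> l"
  shows "emeasure M {x \<in> space M. S x \<le> I}
    \<le> ennreal (exp (l * I)) * (\<integral>\<^sup>+x. ennreal (exp (- l * S x)) \<partial>M)"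
proof -
  have "emeasure M {x \<in> space M. S x \<le> I} = (\<integral>\<^sup>+x. indicator {x \<in> space M. S x \<le> I} x \<partial>M)"
    by (rule nn_integral_indicator[symmetric]) measurable
  also have "\<dots> \<le> (\<integral>\<^sup>+x. ennreal (exp (l * I)) * ennreal (exp (- l * S x)) \<partial>M)"
  proof (rule nn_integral_mono)
    fix x
    have "S x \<le> I \<Longrightarrow> 1 \<le> exp (l * I) * exp (- l * S x)"
      using \<open>0 \<le> l\<close> by (simp add: mult_left_mono flip: exp_add)
    then show "indicator {x \<in> space M. S x \<le> I} x \<le> ennreal (exp (l * I)) * ennreal (exp (- l * S x))"
      by (auto simp: indicator_def ennreal_mult[symmetric])
  qed
  also have "\<dots> = ennreal (exp (l * I)) * (\<integral>\<^sup>+x. ennreal (exp (- l * S x)) \<partial>M)"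
    by (rule nn_integral_cmult) measurable
  finally show ?thesis .
qed

lemma prob_sum_growth_ind_le:
  fixes I :: real and n :: nat
  assumes \<beta>: "0 < \<beta>" "\<beta> < 1/8" and n: "0 < n" and I: "I / p_beta \<beta> \<le> n"
  defines "P \<equiv> Pi\<^sub>M {..<n} (\<lambda>_. unif)"
  shows "measure P {x \<in> space P. (\<Sum>s<n. growth_ind e \<beta> s x) \<le> I}
    \<le> exp (- (2 * (p_beta \<beta>)\<^sup>2 / n) * (n - I / p_beta \<beta>)\<^sup>2)"
proof -
  interpret P: prob_space P
    unfolding P_def by (intro prob_space_PiM prob_space_unif)
  define p where "p = p_beta \<beta>"
  have p: "0 < p" "p \<le> 1"
    using p_beta_pos[OF \<beta>] p_beta_le_1[OF \<beta>] by (simp_all add: p_def)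
  \<comment> \<open>The Chernoff parameter that minimises the exponent \<open>l I + n (l\<^sup>2 / 8 - l p)\<close>.\<close>
  define l where "l = 4 * (n * p - I) / n"
  have l: "0 \<le> l"
    using I p n by (simp add: l_def p_def field_simps)
  have "(\<lambda>x. \<Sum>s<n. growth_ind e \<beta> s x) \<in> borel_measurable P"
    unfolding P_def by (intro borel_measurable_sum borel_measurable_growth_ind_PiM) auto
  then have "emeasure P {x \<in> space P. (\<Sum>s<n. growth_ind e \<beta> s x) \<le> I}
      \<le> ennreal (exp (l * I)) * (\<integral>\<^sup>+x. ennreal (exp (- l * (\<Sum>s<n. growth_ind e \<beta> s x))) \<partial>P)"
    using l by (rule emeasure_le_exp_mult_nn_integral_exp)
  also have "\<dots> \<le> ennreal (exp (l * I)) * ennreal ((1 - p + p * exp (- l)) ^ n)"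
    unfolding P_def p_def by (intro mult_left_mono nn_integral_exp_neg_sum_growth_ind_le \<beta> l) simp
  also have "\<dots> = ennreal (exp (l * I) * (1 - p + p * exp (- l)) ^ n)"
    using p by (simp add: ennreal_mult add_nonneg_nonneg)
  also have "\<dots> \<le> ennreal (exp (l * I + n * (l\<^sup>2 / 8 - l * p)))"
  proof (rule ennreal_leI)
    have "(1 - p + p * exp (- l)) ^ n \<le> exp (l\<^sup>2 / 8 - l * p) ^ n"
      using p bernoulli_mgf_le_exp[OF l p(2)] by (intro power_mono) (simp_all add: add_nonneg_nonneg)
    then show "exp (l * I) * (1 - p + p * exp (- l)) ^ n \<le> exp (l * I + n * (l\<^sup>2 / 8 - l * p))"
      by (simp add: exp_add exp_of_nat_mult)
  qed
  also have "l * I + n * (l\<^sup>2 / 8 - l * p) = - (2 * p\<^sup>2 / n) * (n - I / p)\<^sup>2"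
    using n p by (simp add: l_def field_simps power2_eq_square)
  finally show ?thesis
    by (simp add: P.emeasure_eq_measure p_def)
qed

lemma prob_approx_v_le_half_le:
  fixes n :: nat
  assumes e: "0 < e" and \<beta>: "0 < \<beta>" "\<beta> < 1/8" and n: "0 < n"
    and I: "of_int \<lceil>ln (1 / (2 * e)) / ln (1 + \<beta>)\<rceil> / p_beta \<beta> \<le> n"
  defines "P \<equiv> Pi\<^sub>M {..<n} (\<lambda>_. unif)"
  shows "measure P {x \<in> space P. \<forall>s\<le>n. approx_v e x s \<le> 1/2}
    \<le> exp (- (2 * (p_beta \<beta>)\<^sup>2 / n) * (n - of_int \<lceil>ln (1 / (2 * e)) / ln (1 + \<beta>)\<rceil> / p_beta \<beta>)\<^sup>2)"
proof -
  let ?I = "of_int \<lceil>ln (1 / (2 * e)) / ln (1 + \<beta>)\<rceil> :: real"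
  interpret P: prob_space P
    unfolding P_def by (intro prob_space_PiM prob_space_unif)
  have "(\<lambda>x. \<Sum>s<n. growth_ind e \<beta> s x) \<in> borel_measurable P"
    unfolding P_def by (intro borel_measurable_sum borel_measurable_growth_ind_PiM) auto
  then have "{x \<in> space P. (\<Sum>s<n. growth_ind e \<beta> s x) \<le> ?I} \<in> P.events"
    by measurable
  moreover have "{x \<in> space P. \<forall>s\<le>n. approx_v e x s \<le> 1/2}
      \<subseteq> {x \<in> space P. (\<Sum>s<n. growth_ind e \<beta> s x) \<le> ?I}"
  proof
    fix x
    assume "x \<in> {x \<in> space P. \<forall>s\<le>n. approx_v e x s \<le> 1/2}"
    then have "x \<in> space P" "(\<Sum>s<n. growth_ind e \<beta> s x) \<le> ln (1 / (2 * e)) / ln (1 + \<beta>)"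
      using sum_growth_ind_le_log[OF e \<beta>(1)] by auto
    then show "x \<in> {x \<in> space P. (\<Sum>s<n. growth_ind e \<beta> s x) \<le> ?I}"
      using le_of_int_ceiling by (auto intro: order_trans)
  qed
  ultimately have "measure P {x \<in> space P. \<forall>s\<le>n. approx_v e x s \<le> 1/2}
      \<le> measure P {x \<in> space P. (\<Sum>s<n. growth_ind e \<beta> s x) \<le> ?I}"
    by (rule P.finite_measure_mono[rotated])
  also have "\<dots> \<le> exp (- (2 * (p_beta \<beta>)\<^sup>2 / n) * (n - ?I / p_beta \<beta>)\<^sup>2)"
    unfolding P_def by (rule prob_sum_growth_ind_le[OF \<beta> n I])
  finally show ?thesis .
qed

section \<open>From the product space to the original variables\<close>

lemma tau1_le_iff: "tau1 e x \<le> ereal (real n) \<longleftrightarrow> (\<exists>s\<le>n. 1/2 < approx_v e x s)"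
proof
  assume "tau1 e x \<le> ereal (real n)"
  then have ex: "\<exists>t. 1/2 < approx_v e x t" and "(LEAST t. 1/2 < approx_v e x t) \<le> n"
    unfolding tau1_def by (auto split: if_splits)
  then show "\<exists>s\<le>n. 1/2 < approx_v e x s"
    using LeastI_ex[OF ex] by blast
next
  assume "\<exists>s\<le>n. 1/2 < approx_v e x s"
  then obtain s where s: "s \<le> n" "1/2 < approx_v e x s"
    by blast
  then have "(LEAST t. 1/2 < approx_v e x t) \<le> s"
    by (intro Least_le)
  then show "tau1 e x \<le> ereal (real n)"
    using s unfolding tau1_def by auto
qed

lemma (in prob_space) distr_restrict_indep_vars_eq_PiM:
  fixes X :: "'i \<Rightarrow> 'a \<Rightarrow> real"
  assumes "\<And>i. X i \<in> borel_measurable M" "indep_vars (\<lambda>_. borel) X I"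
    and "\<And>i. i \<in> I \<Longrightarrow> distr M lborel (X i) = D" and "J \<subseteq> I" "J \<noteq> {}"
  shows "distr M (Pi\<^sub>M J (\<lambda>_. borel)) (\<lambda>\<omega>. \<lambda>i\<in>J. X i \<omega>) = Pi\<^sub>M J (\<lambda>_. D)"
proof -
  have "indep_vars (\<lambda>_. borel) X J"
    using assms(2,4) by (rule indep_vars_subset)
  then have "distr M (Pi\<^sub>M J (\<lambda>_. borel)) (\<lambda>\<omega>. \<lambda>i\<in>J. X i \<omega>) = Pi\<^sub>M J (\<lambda>i. distr M borel (X i))"
    using indep_vars_iff_distr_eq_PiM[OF assms(5), where M'="\<lambda>_. borel" and X=X] assms(1) by simp
  also have "\<dots> = Pi\<^sub>M J (\<lambda>_. D)"
  proof (rule PiM_cong)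
    fix i
    assume "i \<in> J"
    have "distr M borel (X i) = distr M lborel (X i)"
      by (rule distr_cong) simp_all
    then show "distr M borel (X i) = D"
      using assms(3,4) \<open>i \<in> J\<close> by auto
  qed simp
  finally show ?thesis .
qed

lemma sets_approx_v_exceeds_half:
  fixes n :: nat
  defines "P \<equiv> Pi\<^sub>M {..<n} (\<lambda>_. unif)"
  shows "{x \<in> space P. \<exists>s\<le>n. 1/2 < approx_v e x s} \<in> sets P"
proof -
  have "(\<lambda>x. approx_v e x s) \<in> borel_measurable P" if "s \<le> n" for s
    using that unfolding P_def by (intro borel_measurable_approx_v borel_measurable_component_unif) auto
  then have "(\<Union>s\<le>n. {x \<in> space P. 1/2 < approx_v e x s}) \<in> sets P"
    by (intro sets.finite_UN) auto
  also have "(\<Union>s\<le>n. {x \<in> space P. 1/2 < approx_v e x s}) = {x \<in> space P. \<exists>s\<le>n. 1/2 < approx_v e x s}"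
    by auto
  finally show ?thesis .
qed

lemma prob_tau1_le_eq:
  fixes M :: "'a measure" and X :: "nat \<Rightarrow> 'a \<Rightarrow> real" and n :: nat
  assumes "prob_space M" and X: "\<And>i. X i \<in> borel_measurable M"
    and "prob_space.indep_vars M (\<lambda>_. borel) X UNIV" and "\<And>i. distr M lborel (X i) = unif"
    and n: "0 < n"
  defines "P \<equiv> Pi\<^sub>M {..<n} (\<lambda>_. unif)"
  shows "measure M {\<omega> \<in> space M. tau1 e (\<lambda>i. X i \<omega>) \<le> ereal (real n)}
    = 1 - measure P {x \<in> space P. \<forall>s\<le>n. approx_v e x s \<le> 1/2}"
proof -
  interpret M: prob_space M
    by fact
  interpret P: prob_space P
    unfolding P_def by (intro prob_space_PiM prob_space_unif)
  define Z where "Z \<omega> = (\<lambda>i\<in>{..<n}. X i \<omega>)" for \<omega>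
  define Good where "Good = {x \<in> space P. \<exists>s\<le>n. 1/2 < approx_v e x s}"
  have Z: "Z \<in> M \<rightarrow>\<^sub>M Pi\<^sub>M {..<n} (\<lambda>_. borel)"
    unfolding Z_def using X by (intro measurable_restrict) auto
  have distr_Z: "distr M (Pi\<^sub>M {..<n} (\<lambda>_. borel)) Z = P"
    unfolding Z_def P_def using n assms(3,4) X by (intro M.distr_restrict_indep_vars_eq_PiM) auto
  have Good: "Good \<in> sets P"
    unfolding Good_def P_def by (rule sets_approx_v_exceeds_half)
  have "{\<omega> \<in> space M. tau1 e (\<lambda>i. X i \<omega>) \<le> ereal (real n)} = Z -` Good \<inter> space M"
  proof -
    have "Z \<omega> \<in> space P" if "\<omega> \<in> space M" for \<omega>
      using measurable_space[OF Z that] distr_Z by (metis space_distr)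
    moreover have "approx_v e (Z \<omega>) s = approx_v e (\<lambda>i. X i \<omega>) s" if "s \<le> n" for \<omega> s
      using that by (intro approx_v_cong) (simp add: Z_def)
    ultimately show ?thesis
      unfolding tau1_le_iff Good_def by auto
  qed
  also have "measure M \<dots> = measure P Good"
  proof -
    have "Good \<in> sets (Pi\<^sub>M {..<n} (\<lambda>_. borel))"
      using Good by (metis distr_Z sets_distr)
    then show ?thesis
      using measure_distr[OF Z, of Good] distr_Z by simp
  qed
  also have "\<dots> = 1 - measure P (space P - Good)"
    using P.prob_compl[OF Good] by simp
  also have "space P - Good = {x \<in> space P. \<forall>s\<le>n. approx_v e x s \<le> 1/2}"
    by (auto simp: Good_def not_less)
  finally show ?thesis .
qed

theorem lemma4:
  fixes M :: "'a measure" and X :: "nat \<Rightarrow> 'a \<Rightarrow> real"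
    and \<epsilon> \<beta> :: real and t :: int
  assumes "prob_space M"
    and "\<And>i. X i \<in> borel_measurable M"
    and "prob_space.indep_vars M (\<lambda>_. borel) X UNIV"
    and "\<And>i. distr M lborel (X i) = uniform_measure lborel {-1..1::real}"
    and "\<epsilon> > 0"
    and "0 < \<beta>" and "\<beta> < 1/8"
    and "real_of_int t \<ge>
           real_of_int \<lceil>ln (1 / (2 * \<epsilon>)) / ln (1 + \<beta>)\<rceil> / (1 - 7 / (8 * (1 - \<beta>)))"
  shows "measure M {\<omega> \<in> space M. tau1 \<epsilon> (\<lambda>i. X i \<omega>) \<le> ereal (real_of_int t)}
         \<ge> 1 - exp (- (2 * (1 - 7 / (8 * (1 - \<beta>)))\<^sup>2 / real_of_int t) *
                 (real_of_int t - real_of_int \<lceil>ln (1 / (2 * \<epsilon>)) / ln (1 + \<beta>)\<rceil>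
                                   / (1 - 7 / (8 * (1 - \<beta>))))\<^sup>2)"
proof -
  let ?I = "real_of_int \<lceil>ln (1 / (2 * \<epsilon>)) / ln (1 + \<beta>)\<rceil>"
  have "1 - exp (- (2 * (p_beta \<beta>)\<^sup>2 / t) * (t - ?I / p_beta \<beta>)\<^sup>2)
      \<le> measure M {\<omega> \<in> space M. tau1 \<epsilon> (\<lambda>i. X i \<omega>) \<le> ereal (real_of_int t)}"
  proof (cases "t \<le> 0")
    case True
    then have "0 \<le> - (2 * (p_beta \<beta>)\<^sup>2 / t) * (t - ?I / p_beta \<beta>)\<^sup>2"
      by (intro mult_nonneg_nonneg) (auto simp: divide_nonneg_nonpos)
    then show ?thesis
      using measure_nonneg[of M] by (smt (verit) one_le_exp_iff)
  next
    case False
    then obtain n where n: "t = int n" "0 < n"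
      by (metis not_le zero_less_imp_eq_int of_nat_0_less_iff)
    then show ?thesis
      using prob_tau1_le_eq[OF assms(1-4) n(2), of \<epsilon>]
        prob_approx_v_le_half_le[OF assms(5-7) n(2)] assms(8)
      by (simp add: p_beta_def)
  qed
  then show ?thesis
    by (simp add: p_beta_def)
qed

end
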